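(* Let $M\ge 1$ be an integer and let $H>0$, $D>0$, $x\in\mathbb{R}$, $\beta_0>0$, $\sigma^2>0$, $P_{\max}>0$, $\tilde{\Gamma}>0$, $\lambda>0$. Let $\bm{a}_u=\bm{a}(x,\bm{u})\in\mathbb{C}^M$ and $\bm{a}_v=\bm{a}(x,\bm{v})\in\mathbb{C}^M$ be the transmit array response vectors toward the user and the target, let $\bm{h}_c=\sqrt{\tfrac{\beta_0}{x^2+H^2}}\,e^{j\phi}\,\bm{a}_u$ for a real phase $\phi$, and consider the problem $$\max_{\bm{w}\in\mathbb{C}^M}\ \frac{|\bm{h}_c^H\bm{w}|^2}{\sigma^2}\quad\text{s.t.}\quad \frac{|\bm{a}_v^H\bm{w}|^2}{(D-x)^2+H^2}\ge\tilde{\Gamma},\qquad \|\bm{w}\|^2\le P_{\max}.$$ Assume this problem is feasible, i.e. $\frac{MP_{\max}}{(D-x)^2+H^2}\ge\tilde{\Gamma}$. Set $\gamma_0=\beta_0/\sigma^2$ and $\rho=\frac{|\bm{a}_u^H\bm{a}_v|}{\|\bm{a}_u\|\,\|\bm{a}_v\|}$. Then the optimal value $\gamma^*$ of the problem is $$\gamma^*=\begin{cases}\dfrac{\gamma_0 P_{\max}M}{x^2+H^2}, & \text{if } \dfrac{MP_{\max}\rho^2}{(D-x)^2+H^2}\ge\tilde{\Gamma},\\[2ex] g(x), & \text{otherwise,}\end{cases}$$ where $$g(x)=\frac{\gamma_0\big((D-x)^2+H^2\big)\left(\rho\sqrt{\tilde{\Gamma}}+\sqrt{1-\rho^2}\s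qrt{\dfrac{MP_{\max}}{(D-x)^2+H^2}-\tilde{\Gamma}}\right)^2}{x^2+H^2}.$$
   Context: Setting: a UAV with a uniform linear array of $M$ antennas (half-wavelength spacing $d=\lambda/2$) is at horizontal position $x$ and altitude $H$; a single-antenna user is at ground point $\bm{u}=(0,0)$ and a sensing target at ground point $\bm{v}=(D,0)$. The array response vector toward a ground point $\bm{p}$ is $\bm{a}(x,\bm{p})=[1,e^{j\pi\sin\theta},\dots,e^{j\pi(M-1)\sin\theta}]^T$, where $\theta$ is the elevation angle of the path from the UAV to $\bm{p}$; for the user $\sin\theta=H/\sqrt{x^2+H^2}$ and for the target $\sin\theta=H/\sqrt{(D-x)^2+H^2}$. Thus $\|\bm{a}_u\|^2=\|\bm{a}_v\|^2=M$. The channel to the user is line-of-sight with power gain $\beta_0/(x^2+H^2)$ ($\beta_0$ = reference channel power at 1 m), with the phase factor $e^{-j2\pi\sqrt{x^2+H^2}/\lambda}$. The objective is the user SNR with precoder $\bm{w}$ and noise power $\sigma^2$; the first constraint requires the transmit beam pattern gain $|\bm{a}_v^H\bm{w}|^2$ toward the target to be at least $((D-x)^2+H^2)\tilde{\Gamma}$; the second is a transmit power budget. *)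

theory Defs
  imports "HOL-Analysis.Analysis"
begin

text \<open>Vectors in C^M are represented as functions nat => complex; only the
entries with index i < M are relevant.\<close>

definition arr_resp :: "real \<Rightarrow> nat \<Rightarrow> complex" where
  "arr_resp s = (\<lambda>i. exp (\<i> * of_real (pi * real i * s)))"

text \<open>Array response vector a(x,p) of the UAV at horizontal position x, altitude H,
towards the ground point (p,0): sin theta = H / sqrt((p - x)^2 + H^2).\<close>
definition arr_vec :: "real \<Rightarrow> real \<Rightarrow> real \<Rightarrow> nat \<Rightarrow> complex" where
  "arr_vec H x p = arr_resp (H / sqrt ((p - x)\<^sup>2 + H\<^sup>2))"

definition herm :: "nat \<Rightarrow> (nat \<Rightarrow> complex) \<Rightarrow> (nat \<Rightarrow> complex) \<Rightarrow> complex" where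
  "herm M a w = (\<Sum>i<M. cnj (a i) * w i)"

definition vnorm :: "nat \<Rightarrow> (nat \<Rightarrow> complex) \<Rightarrow> real" where
  "vnorm M w = sqrt (\<Sum>i<M. (cmod (w i))\<^sup>2)"

end

(*
  Split the beam w along a_v and its orthogonal complement, using |a_u|^2 = |a_v|^2 = M. With
  s = |a_v^H w| the sensing constraint reads s^2 >= Gamma ((D - x)^2 + H^2), and Cauchy-Schwarz on
  the orthogonal parts gives |a_u^H w| <= rho s + sqrt (1 - rho^2) sqrt (M Pmax - s^2). This bound
  peaks at s = rho sqrt (M Pmax), the value reached by the matched beam w ~ a_u: if that beam
  satisfies the sensing constraint, the optimum is M Pmax. Otherwise the bound decreases on the
  feasible range, so the optimum lies on the constraint boundary, where it is attained by a
  combination of a_v and the component of a_u orthogonal to a_v.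
*)
theory Submission
  imports Defs
begin

lemma herm_add_right: "herm M a (\<lambda>i. b i + c i) = herm M a b + herm M a c"
  by (simp add: herm_def sum.distrib algebra_simps)

lemma herm_add_left: "herm M (\<lambda>i. a i + b i) c = herm M a c + herm M b c"
  by (simp add: herm_def sum.distrib algebra_simps)

lemma herm_scale_right: "herm M a (\<lambda>i. \<alpha> * b i) = \<alpha> * herm M a b"
  by (simp add: herm_def sum_distrib_left algebra_simps)

lemma herm_scale_left: "herm M (\<lambda>i. \<alpha> * a i) b = cnj \<alpha> * herm M a b"
  by (simp add: herm_def sum_distrib_left algebra_simps)

lemma herm_diff_scale_right: "herm M a (\<lambda>i. b i - \<alpha> * c i) = herm M a b - \<alpha> * herm M a c"
  by (simp add: herm_def sum_subtractf sum_distrib_left algebra_simps)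

lemma herm_diff_scale_left: "herm M (\<lambda>i. a i - \<alpha> * c i) b = herm M a b - cnj \<alpha> * herm M c b"
  by (simp add: herm_def sum_subtractf sum_distrib_left algebra_simps)

lemma herm_commute: "herm M b a = cnj (herm M a b)"
  by (simp add: herm_def mult.commute)

lemma vnorm_nonneg: "0 \<le> vnorm M w"
  by (simp add: vnorm_def sum_nonneg)

lemma vnorm_sq: "(vnorm M w)\<^sup>2 = (\<Sum>i<M. (cmod (w i))\<^sup>2)"
  by (simp add: vnorm_def sum_nonneg)

lemma vnorm_eq_sqrt: "(vnorm M u)\<^sup>2 = N \<Longrightarrow> vnorm M u = sqrt N"
  using vnorm_nonneg by (metis real_sqrt_unique)

lemma herm_self: "herm M w w = of_real ((vnorm M w)\<^sup>2)"
  unfolding herm_def vnorm_sq of_real_sum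
  by (intro sum.cong) (simp_all only: complex_norm_square mult.commute)

lemma vnorm_scale: "(vnorm M (\<lambda>i. \<alpha> * w i))\<^sup>2 = (cmod \<alpha>)\<^sup>2 * (vnorm M w)\<^sup>2"
  by (simp add: vnorm_sq norm_mult power_mult_distrib sum_distrib_left)

lemma vnorm_add_orthogonal:
  assumes "herm M a b = 0"
  shows "(vnorm M (\<lambda>i. a i + b i))\<^sup>2 = (vnorm M a)\<^sup>2 + (vnorm M b)\<^sup>2"
proof -
  have "herm M b a = 0"
    using assms by (simp add: herm_commute[of M b a])
  then have "herm M (\<lambda>i. a i + b i) (\<lambda>i. a i + b i) = herm M a a + herm M b b"
    using assms by (simp add: herm_add_left herm_add_right)
  then show ?thesis
    by (metis herm_self of_real_add of_real_eq_iff)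
qed

lemma norm_herm_le: "cmod (herm M a b) \<le> vnorm M a * vnorm M b"
proof -
  have "cmod (herm M a b) \<le> (\<Sum>i<M. cmod (cnj (a i) * b i))"
    unfolding herm_def by (rule norm_sum)
  also have "\<dots> = (\<Sum>i<M. cmod (a i) * cmod (b i))"
    by (simp add: norm_mult)
  also have "\<dots> \<le> L2_set (\<lambda>i. cmod (a i)) {..<M} * L2_set (\<lambda>i. cmod (b i)) {..<M}"
    using L2_set_mult_ineq[of "\<lambda>i. cmod (a i)" "\<lambda>i. cmod (b i)"] by simp
  finally show ?thesis
    by (simp add: L2_set_def vnorm_def)
qed

lemma norm_herm_sq_le: "(cmod (herm M a b))\<^sup>2 \<le> (vnorm M a)\<^sup>2 * (vnorm M b)\<^sup>2"
  using power_mono[OF norm_herm_le norm_ge_zero, of M a b 2] by (simp add: power_mult_distrib)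

definition orth_compl :: "nat \<Rightarrow> (nat \<Rightarrow> complex) \<Rightarrow> (nat \<Rightarrow> complex) \<Rightarrow> nat \<Rightarrow> complex" where
  "orth_compl M v w = (\<lambda>i. w i - herm M v w / of_real ((vnorm M v)\<^sup>2) * v i)"

lemma herm_orth_compl_right:
  "herm M a (orth_compl M v w) = herm M a w - herm M v w / of_real ((vnorm M v)\<^sup>2) * herm M a v"
  unfolding orth_compl_def herm_diff_scale_right ..

lemma herm_orth_compl_left:
  "herm M (orth_compl M v a) w
     = herm M a w - cnj (herm M v a) / of_real ((vnorm M v)\<^sup>2) * herm M v w"
  unfolding orth_compl_def herm_diff_scale_left by simp

lemma herm_orth_compl_eq_0: "vnorm M v \<noteq> 0 \<Longrightarrow> herm M v (orth_compl M v w) = 0"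
  by (simp add: herm_orth_compl_right herm_self)

lemma vnorm_orth_compl:
  assumes "vnorm M v \<noteq> 0"
  shows "(vnorm M (orth_compl M v w))\<^sup>2 = (vnorm M w)\<^sup>2 - (cmod (herm M v w))\<^sup>2 / (vnorm M v)\<^sup>2"
proof -
  define c where "c = herm M v w / of_real ((vnorm M v)\<^sup>2)"
  have "herm M (orth_compl M v w) (\<lambda>i. c * v i) = 0"
    using herm_orth_compl_eq_0[OF assms, of w] by (simp add: herm_scale_right herm_commute[of M _ v])
  moreover have "w = (\<lambda>i. orth_compl M v w i + c * v i)"
    by (simp add: orth_compl_def c_def)
  ultimately have "(vnorm M w)\<^sup>2 = (vnorm M (orth_compl M v w))\<^sup>2 + (cmod c)\<^sup>2 * (vnorm M v)\<^sup>2"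
    by (metis vnorm_add_orthogonal vnorm_scale)
  moreover have "cmod c = cmod (herm M v w) / (vnorm M v)\<^sup>2"
    unfolding c_def norm_divide norm_of_real by simp
  ultimately show ?thesis
    using assms by (simp add: power_divide power2_eq_square)
qed

text \<open>On the circle \<open>s\<^sup>2 + t\<^sup>2 = P\<close> the form \<open>r * s + q * t\<close> peaks at
  \<open>s = r * sqrt P < sqrt G\<close>, so it decreases along the arc \<open>s \<ge> sqrt G\<close>.\<close>

lemma linear_form_on_circle_le:
  fixes r q P G s :: real
  assumes r: "0 \<le> r" and q: "0 \<le> q" and rq: "r\<^sup>2 + q\<^sup>2 = 1"
    and far: "r\<^sup>2 * P < G" and sG: "G \<le> s\<^sup>2" and sP: "s\<^sup>2 \<le> P" and s: "0 \<le> s"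
  shows "r * s + q * sqrt (P - s\<^sup>2) \<le> r * sqrt G + q * sqrt (P - G)"
proof -
  define A B t where "A = sqrt G" and "B = sqrt (P - G)" and "t = sqrt (P - s\<^sup>2)"
  have "0 \<le> r\<^sup>2 * P"
    using sP by (simp add: order_trans[OF zero_le_power2])
  then have A: "A\<^sup>2 = G" "0 < A"
    using far by (simp_all add: A_def)
  have B: "B\<^sup>2 = P - G" "0 \<le> B" and t: "t\<^sup>2 = P - s\<^sup>2"
    using sG sP by (simp_all add: B_def t_def)
  have "A \<le> s"
    using sG s by (simp add: A_def real_le_lsqrt)
  have "t \<le> B"
    using sG by (simp add: t_def B_def)
  have "(r * B)\<^sup>2 = r\<^sup>2 * P - r\<^sup>2 * G"
    unfolding power_mult_distrib B(1) by (simp add: right_diff_distrib)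
  also have "\<dots> \<le> (1 - r\<^sup>2) * G"
    using far by (simp add: algebra_simps)
  also have "\<dots> = (q * A)\<^sup>2"
    using rq A(1) by (simp add: power_mult_distrib)
  finally have "r * B \<le> q * A"
    by (rule power2_le_imp_le) (use q A(2) in simp)
  moreover have "r * t \<le> r * B" "q * A \<le> q * s"
    using \<open>t \<le> B\<close> \<open>A \<le> s\<close> r q by (simp_all add: mult_left_mono)
  ultimately have key: "r * (B + t) \<le> q * (s + A)"
    by (simp add: distrib_left)
  have eq: "(s - A) * (s + A) = (B - t) * (B + t)"
    using A(1) B(1) t by (simp add: algebra_simps power2_eq_square)
  have "r * (s - A) * (s + A) = r * (B + t) * (B - t)"
    by (simp only: mult.assoc eq) (simp only: mult_ac)
  also have "\<dots> \<le> q * (s + A) * (B - t)"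
    using key \<open>t \<le> B\<close> by (simp add: mult_right_mono)
  finally have "r * (s - A) * (s + A) \<le> q * (B - t) * (s + A)"
    by (simp only: mult_ac)
  then have "r * (s - A) \<le> q * (B - t)"
    using A(2) s by (simp add: mult_le_cancel_right)
  then show ?thesis
    by (simp add: A_def B_def t_def algebra_simps)
qed

lemma norm_herm_le_common_norm:
  assumes "(vnorm M u)\<^sup>2 = N" and "(vnorm M v)\<^sup>2 = N"
  shows "cmod (herm M u v) \<le> N"
proof -
  have "0 \<le> N"
    using assms(1) zero_le_power2 by metis
  then show ?thesis
    using norm_herm_le[of M u v] by (simp add: vnorm_eq_sqrt assms)
qed

lemma norm_herm_le_correlation_bound:
  assumes N: "0 < N" and u: "(vnorm M u)\<^sup>2 = N" and v: "(vnorm M v)\<^sup>2 = N"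
    and w: "(vnorm M w)\<^sup>2 \<le> P"
  defines "\<rho> \<equiv> cmod (herm M u v) / N" and "s \<equiv> cmod (herm M v w)"
  shows "cmod (herm M u w) \<le> \<rho> * s + sqrt (1 - \<rho>\<^sup>2) * sqrt (N * P - s\<^sup>2)"
proof -
  define u' w' where "u' = orth_compl M v u" and "w' = orth_compl M v w"
  have v0: "vnorm M v \<noteq> 0"
    using v N by auto
  have split: "herm M u w = herm M u' w' + herm M v w / of_real N * herm M u v"
    using herm_orth_compl_right[of M u v w] herm_orth_compl_left[of M v u w']
      herm_orth_compl_eq_0[OF v0, of w]
    by (simp add: u'_def w'_def v)
  have vu: "cmod (herm M v u) = \<rho> * N"
    using N by (simp add: \<rho>_def herm_commute[of M v u])
  have "\<rho>\<^sup>2 \<le> 1"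
    using N norm_herm_le_common_norm[OF u v] by (simp add: \<rho>_def power_le_one)
  have "(cmod (herm M u' w'))\<^sup>2 \<le> (vnorm M u')\<^sup>2 * (vnorm M w')\<^sup>2"
    by (rule norm_herm_sq_le)
  also have "\<dots> = (N - (\<rho> * N)\<^sup>2 / N) * ((vnorm M w)\<^sup>2 - s\<^sup>2 / N)"
    using vnorm_orth_compl[OF v0] by (simp add: u'_def w'_def u v s_def vu)
  also have "\<dots> = (1 - \<rho>\<^sup>2) * (N * (vnorm M w)\<^sup>2 - s\<^sup>2)"
    using N by (simp add: field_simps power2_eq_square)
  also have "\<dots> \<le> (1 - \<rho>\<^sup>2) * (N * P - s\<^sup>2)"
    using \<open>\<rho>\<^sup>2 \<le> 1\<close> w N by (simp add: mult_left_mono)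
  finally have "cmod (herm M u' w') \<le> sqrt (1 - \<rho>\<^sup>2) * sqrt (N * P - s\<^sup>2)"
    by (simp add: real_le_rsqrt flip: real_sqrt_mult)
  moreover have "cmod (herm M v w / of_real N * herm M u v) = \<rho> * s"
    using N by (simp add: norm_mult norm_divide \<rho>_def s_def)
  moreover have "cmod (herm M u w) \<le> cmod (herm M u' w') + cmod (herm M v w / of_real N * herm M u v)"
    unfolding split by (rule norm_triangle_ineq)
  ultimately show ?thesis
    by linarith
qed

definition max_gain :: "real \<Rightarrow> real \<Rightarrow> real \<Rightarrow> real \<Rightarrow> real" where
  "max_gain N P G \<rho> =
     (if G \<le> N * P * \<rho>\<^sup>2 then N * P
      else (\<rho> * sqrt G + sqrt (1 - \<rho>\<^sup>2) * sqrt (N * P - G))\<^sup>2)"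

lemma norm_herm_sq_le_max_gain:
  assumes N: "0 < N" and u: "(vnorm M u)\<^sup>2 = N" and v: "(vnorm M v)\<^sup>2 = N"
    and G: "G \<le> (cmod (herm M v w))\<^sup>2" and w: "(vnorm M w)\<^sup>2 \<le> P"
  shows "(cmod (herm M u w))\<^sup>2 \<le> max_gain N P G (cmod (herm M u v) / N)"
proof (cases "G \<le> N * P * (cmod (herm M u v) / N)\<^sup>2")
  case True
  have "(cmod (herm M u w))\<^sup>2 \<le> N * (vnorm M w)\<^sup>2"
    using norm_herm_sq_le[of M u w] u by simp
  also have "\<dots> \<le> N * P"
    using w N by simp
  finally show ?thesis
    using True by (simp add: max_gain_def)
next
  case False
  define \<rho> s where "\<rho> = cmod (herm M u v) / N" and "s = cmod (herm M v w)"
  have "\<rho>\<^sup>2 \<le> 1"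
    using N norm_herm_le_common_norm[OF u v] by (simp add: \<rho>_def power_le_one)
  have "s\<^sup>2 \<le> N * (vnorm M w)\<^sup>2"
    using norm_herm_sq_le[of M v w] v by (simp add: s_def)
  also have "\<dots> \<le> N * P"
    using w N by simp
  finally have "s\<^sup>2 \<le> N * P" .
  have "cmod (herm M u w) \<le> \<rho> * s + sqrt (1 - \<rho>\<^sup>2) * sqrt (N * P - s\<^sup>2)"
    unfolding \<rho>_def s_def by (rule norm_herm_le_correlation_bound[OF N u v w])
  also have "\<dots> \<le> \<rho> * sqrt G + sqrt (1 - \<rho>\<^sup>2) * sqrt (N * P - G)"
    using False G \<open>\<rho>\<^sup>2 \<le> 1\<close> \<open>s\<^sup>2 \<le> N * P\<close> N
    by (intro linear_form_on_circle_le) (auto simp: \<rho>_def s_def mult_ac)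
  finally have "(cmod (herm M u w))\<^sup>2 \<le> (\<rho> * sqrt G + sqrt (1 - \<rho>\<^sup>2) * sqrt (N * P - G))\<^sup>2"
    by (simp add: power_mono)
  then show ?thesis
    using False by (simp add: max_gain_def \<rho>_def)
qed

lemma matched_beam:
  assumes N: "0 < N" and u: "(vnorm M u)\<^sup>2 = N" and P: "0 \<le> P"
  defines "w \<equiv> \<lambda>i. of_real (sqrt (P / N)) * u i"
  shows "(vnorm M w)\<^sup>2 = P" and "(cmod (herm M u w))\<^sup>2 = N * P"
    and "(cmod (herm M v w))\<^sup>2 = N * P * (cmod (herm M u v) / N)\<^sup>2"
proof -
  show "(vnorm M w)\<^sup>2 = P"
    using N P by (simp add: w_def vnorm_scale u)
  have "herm M u w = of_real (sqrt (P / N) * N)"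
    by (simp add: w_def herm_scale_right herm_self u)
  then have "cmod (herm M u w) = sqrt (P / N) * N"
    using N P by (simp add: norm_mult)
  then show "(cmod (herm M u w))\<^sup>2 = N * P"
    using N P by (simp add: power_mult_distrib power2_eq_square[of N])
  show "(cmod (herm M v w))\<^sup>2 = N * P * (cmod (herm M u v) / N)\<^sup>2"
    using N P by (simp add: w_def herm_scale_right norm_mult power_mult_distrib
        herm_commute[of M v u] power_divide power2_eq_square[of N])
qed

lemma boundary_beam:
  assumes N: "0 < N" and u: "(vnorm M u)\<^sup>2 = N" and v: "(vnorm M v)\<^sup>2 = N"
    and \<rho>: "(cmod (herm M u v) / N)\<^sup>2 < 1" and G: "0 \<le> G" "G \<le> N * P"
  obtains w where "(cmod (herm M v w))\<^sup>2 = G" and "(vnorm M w)\<^sup>2 = P"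
    and "cmod (herm M u w) = cmod (herm M u v) / N * sqrt G
           + sqrt (1 - (cmod (herm M u v) / N)\<^sup>2) * sqrt (N * P - G)"
proof -
  define \<rho> q c where "\<rho> = cmod (herm M u v) / N" and "q = sqrt (1 - \<rho>\<^sup>2)"
    and "c = herm M v u"
  have q: "0 < q" "q\<^sup>2 = 1 - \<rho>\<^sup>2"
    using \<rho> by (simp_all add: q_def \<rho>_def)
  have c: "cmod c = \<rho> * N"
    using N by (simp add: c_def \<rho>_def herm_commute[of M v u])
  \<comment> \<open>\<open>e\<close> aligns the phase of \<open>v\<^sup>H w\<close> with that of \<open>v\<^sup>H u\<close>, so that both parts of
    \<open>u\<^sup>H w\<close> add up coherently\<close>
  define e where "e = (if c = 0 then 1 else c / of_real (cmod c))"
  have e: "cmod e = 1" "cnj c * e = of_real (cmod c)"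
    unfolding e_def using complex_norm_square[of c]
    by (auto simp: norm_divide power2_eq_square field_simps)
  define f where "f = orth_compl M v u"
  have v0: "vnorm M v \<noteq> 0"
    using v N by auto
  have vf: "herm M v f = 0"
    unfolding f_def by (rule herm_orth_compl_eq_0[OF v0])
  have "(vnorm M f)\<^sup>2 = N - (\<rho> * N)\<^sup>2 / N"
    using vnorm_orth_compl[OF v0, of u] by (simp add: f_def u v c[unfolded c_def])
  also have "\<dots> = N * q\<^sup>2"
    unfolding q(2) using N by (simp add: power2_eq_square field_simps)
  finally have f: "(vnorm M f)\<^sup>2 = N * q\<^sup>2" .
  have uf: "herm M u f = of_real (N * q\<^sup>2)"
    using herm_orth_compl_left[of M v u f] vf by (simp add: herm_self f f_def[symmetric])
  define a k where "a = e * of_real (sqrt G) / of_real N" and "k = sqrt (N * P - G) / (N * q)"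
  define w where "w = (\<lambda>i. a * v i + of_real k * f i)"
  show ?thesis
  proof (rule that)
    have "herm M v w = a * of_real N"
      unfolding w_def herm_add_right herm_scale_right vf herm_self v by simp
    then show "(cmod (herm M v w))\<^sup>2 = G"
      using N e(1) G by (simp add: a_def norm_mult norm_divide)
    have "herm M (\<lambda>i. a * v i) (\<lambda>i. of_real k * f i) = 0"
      by (simp add: herm_scale_left herm_scale_right vf)
    then have "(vnorm M w)\<^sup>2 = (cmod a)\<^sup>2 * N + k\<^sup>2 * (N * q\<^sup>2)"
      unfolding w_def by (simp add: vnorm_add_orthogonal vnorm_scale v f)
    also have "\<dots> = G / N + (N * P - G) / N"
      using N G e(1) q(1) by (simp add: a_def k_def norm_mult norm_divide power_divide
          power_mult_distrib) (simp add: field_simps power2_eq_square)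
    finally show "(vnorm M w)\<^sup>2 = P"
      using N by (simp add: field_simps)
    have "herm M u w = a * cnj c + of_real (k * (N * q\<^sup>2))"
      unfolding w_def herm_add_right herm_scale_right uf by (simp add: c_def herm_commute[of M u v])
    also have "a * cnj c = of_real (\<rho> * sqrt G)"
      using N e(2) c by (simp add: a_def field_simps)
    also have "k * (N * q\<^sup>2) = q * sqrt (N * P - G)"
      using N q(1) by (simp add: k_def power2_eq_square)
    finally have "herm M u w = of_real (\<rho> * sqrt G + q * sqrt (N * P - G))"
      by simp
    moreover have "0 \<le> \<rho> * sqrt G + q * sqrt (N * P - G)"
      using N q(1) G by (simp add: \<rho>_def)
    ultimately have "cmod (herm M u w) = \<rho> * sqrt G + q * sqrt (N * P - G)"
      by (metis norm_of_real abs_of_nonneg)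
    then show "cmod (herm M u w) = cmod (herm M u v) / N * sqrt G
           + sqrt (1 - (cmod (herm M u v) / N)\<^sup>2) * sqrt (N * P - G)"
      by (simp add: \<rho>_def q_def)
  qed
qed

lemma max_gain_attained:
  assumes N: "0 < N" and u: "(vnorm M u)\<^sup>2 = N" and v: "(vnorm M v)\<^sup>2 = N"
    and P: "0 \<le> P" and G: "G \<le> N * P"
  obtains w where "G \<le> (cmod (herm M v w))\<^sup>2" and "(vnorm M w)\<^sup>2 \<le> P"
    and "(cmod (herm M u w))\<^sup>2 = max_gain N P G (cmod (herm M u v) / N)"
proof (cases "G \<le> N * P * (cmod (herm M u v) / N)\<^sup>2")
  case True
  then show ?thesis
    using matched_beam(1,2)[OF N u P] matched_beam(3)[OF N u P, where v = v]
    by (intro that) (simp_all add: max_gain_def)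
next
  case False
  have "(cmod (herm M u v) / N)\<^sup>2 < 1"
  proof (rule ccontr)
    assume "\<not> (cmod (herm M u v) / N)\<^sup>2 < 1"
    then have "N * P * 1 \<le> N * P * (cmod (herm M u v) / N)\<^sup>2"
      using N P by (intro mult_left_mono) auto
    then show False
      using False G by simp
  qed
  moreover have "0 \<le> N * P * (cmod (herm M u v) / N)\<^sup>2"
    using N P by simp
  with False have "0 \<le> G"
    by linarith
  ultimately obtain w where "(cmod (herm M v w))\<^sup>2 = G" "(vnorm M w)\<^sup>2 = P"
    "cmod (herm M u w) = cmod (herm M u v) / N * sqrt G
       + sqrt (1 - (cmod (herm M u v) / N)\<^sup>2) * sqrt (N * P - G)"
    using boundary_beam[OF N u v _ _ G] by blast
  then show ?thesis
    using False by (intro that[of w]) (simp_all add: max_gain_def)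
qed

lemma Sup_gain_eq_max_gain:
  assumes N: "0 < N" and u: "(vnorm M u)\<^sup>2 = N" and v: "(vnorm M v)\<^sup>2 = N"
    and P: "0 \<le> P" and G: "G \<le> N * P" and K: "0 \<le> K"
  shows "Sup {K * (cmod (herm M u w))\<^sup>2 | w. G \<le> (cmod (herm M v w))\<^sup>2 \<and> (vnorm M w)\<^sup>2 \<le> P}
         = K * max_gain N P G (cmod (herm M u v) / N)"
proof (rule cSup_eq_maximum)
  obtain w where "G \<le> (cmod (herm M v w))\<^sup>2" "(vnorm M w)\<^sup>2 \<le> P"
    "(cmod (herm M u w))\<^sup>2 = max_gain N P G (cmod (herm M u v) / N)"
    using max_gain_attained[OF N u v P G] .
  then show "K * max_gain N P G (cmod (herm M u v) / N)
      \<in> {K * (cmod (herm M u w))\<^sup>2 | w. G \<le> (cmod (herm M v w))\<^sup>2 \<and> (vnorm M w)\<^sup>2 \<le> P}"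
    by (metis (mono_tags, lifting) mem_Collect_eq)
next
  fix y
  assume "y \<in> {K * (cmod (herm M u w))\<^sup>2 | w. G \<le> (cmod (herm M v w))\<^sup>2 \<and> (vnorm M w)\<^sup>2 \<le> P}"
  then show "y \<le> K * max_gain N P G (cmod (herm M u v) / N)"
    using norm_herm_sq_le_max_gain[OF N u v] K by (auto intro: mult_left_mono)
qed

lemma max_gain_rescale:
  assumes d: "0 < d"
  shows "max_gain N P (\<Gamma> * d) \<rho> =
    (if \<Gamma> \<le> N * P * \<rho>\<^sup>2 / d then N * P
     else d * (\<rho> * sqrt \<Gamma> + sqrt (1 - \<rho>\<^sup>2) * sqrt (N * P / d - \<Gamma>))\<^sup>2)"
proof -
  have "N * P - \<Gamma> * d = d * (N * P / d - \<Gamma>)"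
    using d by (simp add: field_simps)
  then have "sqrt (N * P - \<Gamma> * d) = sqrt d * sqrt (N * P / d - \<Gamma>)"
    by (simp only: real_sqrt_mult)
  then have "(\<rho> * sqrt (\<Gamma> * d) + sqrt (1 - \<rho>\<^sup>2) * sqrt (N * P - \<Gamma> * d))\<^sup>2
      = (sqrt d * (\<rho> * sqrt \<Gamma> + sqrt (1 - \<rho>\<^sup>2) * sqrt (N * P / d - \<Gamma>)))\<^sup>2"
    by (simp add: real_sqrt_mult algebra_simps)
  also have "\<dots> = d * (\<rho> * sqrt \<Gamma> + sqrt (1 - \<rho>\<^sup>2) * sqrt (N * P / d - \<Gamma>))\<^sup>2"
    using d by (simp add: power_mult_distrib)
  finally show ?thesis
    using d by (simp add: max_gain_def pos_le_divide_eq)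
qed

lemma vnorm_arr_vec: "(vnorm M (arr_vec H x p))\<^sup>2 = real M"
  by (simp add: vnorm_sq arr_vec_def arr_resp_def)

lemma norm_herm_phase_scaled:
  "cmod (herm M (\<lambda>i. of_real a * exp (\<i> * of_real \<phi>) * u i) w) = \<bar>a\<bar> * cmod (herm M u w)"
  by (simp add: herm_scale_left norm_mult)

theorem proposition1:
  fixes M :: nat and H D x \<beta>\<^sub>0 \<sigma>2 Pmax \<Gamma> \<phi> :: real
  assumes M: "M \<ge> 1" and H: "H > 0" and D: "D > 0" and b0: "\<beta>\<^sub>0 > 0"
    and sig: "\<sigma>2 > 0" and P: "Pmax > 0" and G: "\<Gamma> > 0"
    and feas: "real M * Pmax / ((D - x)\<^sup>2 + H\<^sup>2) \<ge> \<Gamma>"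
  shows
    "let au = arr_vec H x 0; av = arr_vec H x D;
         hc = (\<lambda>i. of_real (sqrt (\<beta>\<^sub>0 / (x\<^sup>2 + H\<^sup>2))) * exp (\<i> * of_real \<phi>) * au i);
         \<gamma>0 = \<beta>\<^sub>0 / \<sigma>2;
         \<rho> = cmod (herm M au av) / (vnorm M au * vnorm M av);
         dv = (D - x)\<^sup>2 + H\<^sup>2;
         g = \<gamma>0 * dv * (\<rho> * sqrt \<Gamma> + sqrt (1 - \<rho>\<^sup>2) * sqrt (real M * Pmax / dv - \<Gamma>))\<^sup>2
               / (x\<^sup>2 + H\<^sup>2);
         \<gamma>opt = (if real M * Pmax * \<rho>\<^sup>2 / dv \<ge> \<Gamma>
                   then \<gamma>0 * Pmax * real M / (x\<^sup>2 + H\<^sup>2) else g)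
     in Sup {(cmod (herm M hc w))\<^sup>2 / \<sigma>2 | w.
               (cmod (herm M av w))\<^sup>2 / dv \<ge> \<Gamma> \<and> (vnorm M w)\<^sup>2 \<le> Pmax} = \<gamma>opt"
proof -
  define au av d0 dv K where "au = arr_vec H x 0" and "av = arr_vec H x D"
    and "d0 = x\<^sup>2 + H\<^sup>2" and "dv = (D - x)\<^sup>2 + H\<^sup>2" and "K = \<beta>\<^sub>0 / \<sigma>2 / d0"
  define hc where "hc = (\<lambda>i. of_real (sqrt (\<beta>\<^sub>0 / d0)) * exp (\<i> * of_real \<phi>) * au i)"
  have pos: "0 < real M" "0 < d0" "0 < dv" "0 \<le> K"
    using M H b0 sig by (simp_all add: d0_def dv_def K_def add_nonneg_pos)
  have norms: "(vnorm M au)\<^sup>2 = real M" "(vnorm M av)\<^sup>2 = real M"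
    by (simp_all add: au_def av_def vnorm_arr_vec)
  have gain: "(cmod (herm M hc w))\<^sup>2 / \<sigma>2 = K * (cmod (herm M au w))\<^sup>2" for w
    unfolding hc_def norm_herm_phase_scaled using b0 pos by (simp add: power_mult_distrib K_def)
  have rho: "vnorm M au * vnorm M av = real M"
    using vnorm_eq_sqrt[OF norms(1)] vnorm_eq_sqrt[OF norms(2)] by simp
  have "Sup {(cmod (herm M hc w))\<^sup>2 / \<sigma>2 | w. \<Gamma> \<le> (cmod (herm M av w))\<^sup>2 / dv \<and> (vnorm M w)\<^sup>2 \<le> Pmax}
      = Sup {K * (cmod (herm M au w))\<^sup>2 | w. \<Gamma> * dv \<le> (cmod (herm M av w))\<^sup>2 \<and> (vnorm M w)\<^sup>2 \<le> Pmax}"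
    by (simp only: gain pos_le_divide_eq[OF pos(3)])
  also have "\<dots> = K * max_gain (real M) Pmax (\<Gamma> * dv) (cmod (herm M au av) / real M)"
    using feas pos P by (intro Sup_gain_eq_max_gain norms) (simp_all add: dv_def pos_le_divide_eq)
  finally show ?thesis
    unfolding Let_def au_def[symmetric] av_def[symmetric] d0_def[symmetric] dv_def[symmetric]
      hc_def[symmetric] rho
    by (simp add: max_gain_rescale pos K_def)
qed

end
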